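(* Let $Q$ be a quadrilateral in $K^2$. (1) Every $Q$-orthogonal pair $\{\ell_1,\ell_2\}$ of bisectors of $Q$ such that $\ell_1$ and $\ell_2$ are not both parallel to a pair of parallel sides or parallel diagonals of $Q$ is $Q$-antipodal, and hence is a $Q$-pair. (2) Every $Q$-antipodal pair of bisectors of $Q$ that do not share a midpoint is $Q$-orthogonal, and hence is a $Q$-pair.
   Context: $K$ is a field of characteristic $\neq 2$. Every line $L$ in $K^2$ has an equation $tX-uY+v=0$ normalized so that $t=1$ if $u=0$ and $u=1$ if $u\neq 0$; coefficients denoted $t_L,u_L,v_L$. A quadrilateral $Q=ABA'B'$ consists of four distinct lines $A,B,A',B'$ (sides), not all through one point, with adjacent sides ($A,B$; $B,A'$; $A',B'$; $B',A$) not parallel; opposite sides may be parallel. Vertices: $A\cap B$, $B\cap A'$, $A'\cap B'$, $B'\cap A$ (two may coincide if three sides are concurrent). Diagonals: the lines through nonadjacent vertices. The centroid is the average of the four vertices. Let $\alpha=t_Au_Bu_{A'}u_{B'}-u_At_Bu_{A'}u_{B'}+u_Au_Bt_{A'}u_{B'}-u_Au_Bu_{A'}t_{B'}$, $\beta=t_Au_Bt_{A'}u_{B'}-u_At_Bu_{A'}t_{B'}$, $\gamma=t_At_Bt_{A'}u_{B'}-t_At_Bu_{A'}t_{B'}+t_Au_Bt_{A'}t_{B'}-u_At_Bt_{A'}t_{B'}$, and $\langle \mathbf v,\mathbf w\rangle_Q=\mathbf v^T\begin{pmatrix}\gamma&-\beta\\-\beta&\alpha\end{pmatrix}\mathbf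 w$. Lines $\ell_1,\ell_2$ are $Q$-orthogonal if $\langle (u_{\ell_1},t_{\ell_1}),(u_{\ell_2},t_{\ell_2})\rangle_Q=0$. A line $\ell$ crosses a pair $\{\ell_1,\ell_2\}$ if distinct from both and not parallel to both; $\mathrm{mid}_{\{\ell_1,\ell_2\}}(\ell)$ is the midpoint of the points where $\ell$ meets $\ell_1,\ell_2$ (the point at infinity of $\ell$ if one is at infinity). $\ell$ bisects $Q$ (is a bisector) if $\mathrm{mid}_{\mathsf P}(\ell)$ is the same for all pairs $\mathsf P$ among $\{A,A'\},\{B,B'\}$ that $\ell$ crosses; this common point is the midpoint of the bisector. A pair $\{\ell_1,\ell_2\}$ of bisectors (possibly $\ell_1=\ell_2$) is $Q$-antipodal if the midpoint of their midpoints is the centroid of $Q$, and is a $Q$-pair if it is both $Q$-antipodal and $Q$-orthogonal. *)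

theory Defs
  imports Main
begin

text \<open>A line of K^2 is represented by the coefficient triple (t,u,v) of its
  normalized equation t X - u Y + v = 0 (t = 1 if u = 0, and u = 1 if u \<noteq> 0).\<close>

type_synonym 'a line = "'a \<times> 'a \<times> 'a"
type_synonym 'a point = "'a \<times> 'a"

definition tL :: "'a line \<Rightarrow> 'a" where "tL l = fst l"
definition uL :: "'a line \<Rightarrow> 'a" where "uL l = fst (snd l)"
definition vL :: "'a line \<Rightarrow> 'a" where "vL l = snd (snd l)"

definition is_line :: "'a::field line \<Rightarrow> bool" where
  "is_line l \<longleftrightarrow> (uL l = 0 \<and> tL l = 1) \<or> uL l = 1"

definition on_line :: "'a::field point \<Rightarrow> 'a line \<Rightarrow> bool" where
  "on_line p l \<longleftrightarrow> tL l * fst p - uL l * snd p + vL l = 0"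

text \<open>Parallel = same direction (reflexive: a line is parallel to itself).\<close>
definition parallel :: "'a::field line \<Rightarrow> 'a line \<Rightarrow> bool" where
  "parallel l1 l2 \<longleftrightarrow> tL l1 * uL l2 = uL l1 * tL l2"

definition meet :: "'a::field line \<Rightarrow> 'a line \<Rightarrow> 'a point" where
  "meet l1 l2 = (THE p. on_line p l1 \<and> on_line p l2)"

definition line_through :: "'a::field point \<Rightarrow> 'a point \<Rightarrow> 'a line" where
  "line_through p q = (THE l. is_line l \<and> on_line p l \<and> on_line q l)"

definition midpt :: "'a::field point \<Rightarrow> 'a point \<Rightarrow> 'a point" where
  "midpt p q = ((fst p + fst q) / 2, (snd p + snd q) / 2)"

definition quadrilateral :: "'a::field line \<Rightarrow> 'a line \<Rightarrow> 'a line \<Rightarrow> 'a line \<Rightarrow> bool" where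
  "quadrilateral A B Ap Bp \<longleftrightarrow>
     is_line A \<and> is_line B \<and> is_line Ap \<and> is_line Bp \<and>
     distinct [A, B, Ap, Bp] \<and>
     \<not> (\<exists>p. on_line p A \<and> on_line p B \<and> on_line p Ap \<and> on_line p Bp) \<and>
     \<not> parallel A B \<and> \<not> parallel B Ap \<and> \<not> parallel Ap Bp \<and> \<not> parallel Bp A"

definition centroid :: "'a::field line \<Rightarrow> 'a line \<Rightarrow> 'a line \<Rightarrow> 'a line \<Rightarrow> 'a point" where
  "centroid A B Ap Bp =
     (let v1 = meet A B; v2 = meet B Ap; v3 = meet Ap Bp; v4 = meet Bp A in
      ((fst v1 + fst v2 + fst v3 + fst v4) / 4, (snd v1 + snd v2 + snd v3 + snd v4) / 4))"

definition diag1 :: "'a::field line \<Rightarrow> 'a line \<Rightarrow> 'a line \<Rightarrow> 'a line \<Rightarrow> 'a line" where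
  "diag1 A B Ap Bp = line_through (meet A B) (meet Ap Bp)"

definition diag2 :: "'a::field line \<Rightarrow> 'a line \<Rightarrow> 'a line \<Rightarrow> 'a line \<Rightarrow> 'a line" where
  "diag2 A B Ap Bp = line_through (meet B Ap) (meet Bp A)"

definition qalpha :: "'a::field line \<Rightarrow> 'a line \<Rightarrow> 'a line \<Rightarrow> 'a line \<Rightarrow> 'a" where
  "qalpha A B Ap Bp =
     tL A * uL B * uL Ap * uL Bp - uL A * tL B * uL Ap * uL Bp
     + uL A * uL B * tL Ap * uL Bp - uL A * uL B * uL Ap * tL Bp"

definition qbeta :: "'a::field line \<Rightarrow> 'a line \<Rightarrow> 'a line \<Rightarrow> 'a line \<Rightarrow> 'a" where
  "qbeta A B Ap Bp = tL A * uL B * tL Ap * uL Bp - uL A * tL B * uL Ap * tL Bp"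

definition qgamma :: "'a::field line \<Rightarrow> 'a line \<Rightarrow> 'a line \<Rightarrow> 'a line \<Rightarrow> 'a" where
  "qgamma A B Ap Bp =
     tL A * tL B * tL Ap * uL Bp - tL A * tL B * uL Ap * tL Bp
     + tL A * uL B * tL Ap * tL Bp - uL A * tL B * tL Ap * tL Bp"

definition qform :: "'a::field line \<Rightarrow> 'a line \<Rightarrow> 'a line \<Rightarrow> 'a line \<Rightarrow> 'a \<times> 'a \<Rightarrow> 'a \<times> 'a \<Rightarrow> 'a" where
  "qform A B Ap Bp v w =
     fst v * (qgamma A B Ap Bp * fst w - qbeta A B Ap Bp * snd w)
     + snd v * (- qbeta A B Ap Bp * fst w + qalpha A B Ap Bp * snd w)"

definition Q_orthogonal :: "'a::field line \<Rightarrow> 'a line \<Rightarrow> 'a line \<Rightarrow> 'a line \<Rightarrow> 'a line \<Rightarrow> 'a line \<Rightarrow> bool" where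
  "Q_orthogonal A B Ap Bp l1 l2 \<longleftrightarrow> qform A B Ap Bp (uL l1, tL l1) (uL l2, tL l2) = 0"

text \<open>Projective points on a line: a finite point, or the point at infinity of the line.\<close>
datatype 'a ppoint = Fin "'a \<times> 'a" | Infty

definition crosses :: "'a::field line \<Rightarrow> 'a line \<Rightarrow> 'a line \<Rightarrow> bool" where
  "crosses l l1 l2 \<longleftrightarrow> l \<noteq> l1 \<and> l \<noteq> l2 \<and> \<not> (parallel l l1 \<and> parallel l l2)"

text \<open>mid_{l1,l2}(l), meaningful when l crosses {l1,l2}.\<close>
definition mid :: "'a::field line \<Rightarrow> 'a line \<Rightarrow> 'a line \<Rightarrow> 'a ppoint" where
  "mid l1 l2 l = (if parallel l l1 \<or> parallel l l2 then Infty
                  else Fin (midpt (meet l l1) (meet l l2)))"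

text \<open>l bisects Q with midpoint m (l crosses at least one of the pairs
  {A,A'}, {B,B'} -- always the case for a quadrilateral).\<close>
definition bisector_mid :: "'a::field line \<Rightarrow> 'a line \<Rightarrow> 'a line \<Rightarrow> 'a line \<Rightarrow> 'a line \<Rightarrow> 'a ppoint \<Rightarrow> bool" where
  "bisector_mid A B Ap Bp l m \<longleftrightarrow> is_line l \<and>
     (crosses l A Ap \<or> crosses l B Bp) \<and>
     (crosses l A Ap \<longrightarrow> mid A Ap l = m) \<and>
     (crosses l B Bp \<longrightarrow> mid B Bp l = m)"

definition bisects :: "'a::field line \<Rightarrow> 'a line \<Rightarrow> 'a line \<Rightarrow> 'a line \<Rightarrow> 'a line \<Rightarrow> bool" where
  "bisects A B Ap Bp l \<longleftrightarrow> (\<exists>m. bisector_mid A B Ap Bp l m)"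

definition bis_midpoint :: "'a::field line \<Rightarrow> 'a line \<Rightarrow> 'a line \<Rightarrow> 'a line \<Rightarrow> 'a line \<Rightarrow> 'a ppoint" where
  "bis_midpoint A B Ap Bp l = (THE m. bisector_mid A B Ap Bp l m)"

definition Q_antipodal :: "'a::field line \<Rightarrow> 'a line \<Rightarrow> 'a line \<Rightarrow> 'a line \<Rightarrow> 'a line \<Rightarrow> 'a line \<Rightarrow> bool" where
  "Q_antipodal A B Ap Bp l1 l2 \<longleftrightarrow>
     bisects A B Ap Bp l1 \<and> bisects A B Ap Bp l2 \<and>
     (\<exists>m1 m2. bis_midpoint A B Ap Bp l1 = Fin m1 \<and> bis_midpoint A B Ap Bp l2 = Fin m2 \<and>
              midpt m1 m2 = centroid A B Ap Bp)"

definition Q_pair :: "'a::field line \<Rightarrow> 'a line \<Rightarrow> 'a line \<Rightarrow> 'a line \<Rightarrow> 'a line \<Rightarrow> 'a line \<Rightarrow> bool" where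
  "Q_pair A B Ap Bp l1 l2 \<longleftrightarrow> Q_antipodal A B Ap Bp l1 l2 \<and> Q_orthogonal A B Ap Bp l1 l2"

definition both_par_to_par_pair :: "'a::field line \<Rightarrow> 'a line \<Rightarrow> 'a line \<Rightarrow> 'a line \<Rightarrow> 'a line \<Rightarrow> 'a line \<Rightarrow> bool" where
  "both_par_to_par_pair A B Ap Bp l1 l2 \<longleftrightarrow>
     (parallel A Ap \<and> parallel l1 A \<and> parallel l2 A) \<or>
     (parallel B Bp \<and> parallel l1 B \<and> parallel l2 B) \<or>
     (parallel (diag1 A B Ap Bp) (diag2 A B Ap Bp) \<and>
        parallel l1 (diag1 A B Ap Bp) \<and> parallel l2 (diag1 A B Ap Bp))"

end

theory Submission
  imports Defs "HOL-Library.Product_Plus"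
begin

text \<open>In the affine coordinates x = A(p), y = B(p), the line through m with direction d
  bisects Q with midpoint m iff d is annihilated by two covectors rowA m and rowB m that depend
  affinely on m. So bisector midpoints lie on the conic where these rows are dependent, and a
  direction that is not isotropic for the Q-form determines its midpoint. The key identity:
  for m on this conic, the rows at m and at its reflection 2c - m in the centroid c are
  orthogonal for the adjugate of the Q-form. At a point other than c a bisector direction is
  perpendicular to a nonzero row, which gives (2). For (1), nondegeneracy of the Q-form turns
  the identity into: every direction Q-orthogonal to the bisector direction at m2 is a bisector
  direction at 2c - m2. Hence a non-isotropic Q-orthogonal bisector has midpoint 2c - m2, while
  an isotropic bisector direction is parallel to both sides of a parallel pair or to both
  diagonals, and by nondegeneracy the Q-orthogonal direction is parallel to it.\<close>

definition line_eval :: "'a::field line \<Rightarrow> 'a point \<Rightarrow> 'a" where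
  "line_eval X p = tL X * fst p - uL X * snd p + vL X"

definition line_lin :: "'a::field line \<Rightarrow> 'a \<times> 'a \<Rightarrow> 'a" where
  "line_lin X d = tL X * fst d - uL X * snd d"

definition line_dir :: "'a::field line \<Rightarrow> 'a \<times> 'a" where
  "line_dir l = (uL l, tL l)"

definition line_cross :: "'a::field line \<Rightarrow> 'a line \<Rightarrow> 'a" where
  "line_cross X Y = tL X * uL Y - uL X * tL Y"

lemma on_line_iff_eval: "on_line p X \<longleftrightarrow> line_eval X p = 0"
  unfolding on_line_def line_eval_def ..

lemma parallel_iff_cross: "parallel X Y \<longleftrightarrow> line_cross X Y = 0"
  unfolding parallel_def line_cross_def by simp

lemma line_lin_dir: "line_lin X (line_dir l) = line_cross X l"
  unfolding line_lin_def line_dir_def line_cross_def by (simp add: mult.commute)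

lemma line_cross_antisym: "line_cross X Y = - line_cross Y X"
  unfolding line_cross_def by (simp add: mult.commute)

lemma line_lin_diff: "line_lin X (q - p) = line_eval X q - line_eval X p"
  unfolding line_lin_def line_eval_def by (simp add: algebra_simps)

lemma line_eval_midpt:
  assumes "(2::'a::field) \<noteq> 0"
  shows "line_eval X (midpt p q) = (line_eval X p + line_eval X q) / (2::'a)"
proof -
  have "2 * fst (midpt p q) = fst p + fst q" "2 * snd (midpt p q) = snd p + snd q"
    unfolding midpt_def using assms by simp_all
  then have "2 * line_eval X (midpt p q) = line_eval X p + line_eval X q"
    unfolding line_eval_def by algebra
  then show ?thesis using assms by (simp add: eq_divide_eq mult.commute)
qed

lemma parallel_refl: "parallel X X"
  unfolding parallel_def by (simp add: mult.commute)

lemma parallel_sym: "parallel X Y \<longleftrightarrow> parallel Y X"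
  unfolding parallel_def by (auto simp: mult.commute)

lemma line_dir_nonzero: "is_line l \<Longrightarrow> line_dir l \<noteq> 0"
  unfolding is_line_def line_dir_def zero_prod_def by auto

lemma parallel_trans:
  assumes "is_line l" "parallel l X" "parallel l Y"
  shows "parallel X Y"
proof -
  have "uL l * line_cross X Y = 0" "tL l * line_cross X Y = 0"
    using assms(2,3) unfolding parallel_iff_cross line_cross_def by algebra+
  then show ?thesis
    using line_dir_nonzero[OF assms(1)] unfolding parallel_iff_cross line_dir_def zero_prod_def by auto
qed

lemma parallel_if_common_direction:
  assumes "line_lin X w = 0" "line_lin Y w = 0" "w \<noteq> 0"
  shows "parallel X Y"
proof -
  have "fst w * line_cross X Y = 0" "snd w * line_cross X Y = 0"
    using assms(1,2) unfolding line_lin_def line_cross_def by algebra+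
  then show ?thesis using assms(3) unfolding parallel_iff_cross by (auto simp: prod_eq_iff)
qed

lemma vector_eq_0_if_lin_eq_0:
  assumes "\<not> parallel X Y" "line_lin X d = 0" "line_lin Y d = 0"
  shows "d = 0"
proof -
  have "line_cross X Y * fst d = 0" "line_cross X Y * snd d = 0"
    using assms(2,3) unfolding line_lin_def line_cross_def by algebra+
  then show ?thesis using assms(1) unfolding parallel_iff_cross by (simp add: prod_eq_iff)
qed

lemma point_eq_if_evals_eq:
  assumes "\<not> parallel X Y" "line_eval X p = line_eval X q" "line_eval Y p = line_eval Y q"
  shows "p = q"
  using vector_eq_0_if_lin_eq_0[of X Y "p - q"] assms by (simp add: line_lin_diff)

lemma parallel_lines_eq:
  assumes "is_line l" "is_line l'" "parallel l l'" "on_line p l" "on_line p l'"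
  shows "l = l'"
proof -
  have t: "tL l = tL l'" and u: "uL l = uL l'"
    using assms(1-3) unfolding is_line_def parallel_def by auto
  have "vL l = vL l'"
    using assms(4,5) t u unfolding on_line_def by algebra
  with t u show ?thesis unfolding tL_def uL_def vL_def by (simp add: prod_eq_iff)
qed

lemma meet_unique:
  assumes "\<not> parallel X Y"
  shows "\<exists>!p. on_line p X \<and> on_line p Y"
proof (rule ex_ex1I)
  define D where "D = uL X * tL Y - tL X * uL Y"
  define p where "p = ((vL X * uL Y - uL X * vL Y) / D, (tL Y * vL X - tL X * vL Y) / D)"
  have "D \<noteq> 0" using assms unfolding parallel_def D_def by auto
  then have "D * fst p = vL X * uL Y - uL X * vL Y" "D * snd p = tL Y * vL X - tL X * vL Y"
    unfolding p_def by simp_all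
  then have "D * line_eval X p = 0" "D * line_eval Y p = 0"
    unfolding line_eval_def D_def by algebra+
  then show "\<exists>p. on_line p X \<and> on_line p Y"
    using \<open>D \<noteq> 0\<close> unfolding on_line_iff_eval by (metis no_zero_divisors)
next
  fix p q
  assume "on_line p X \<and> on_line p Y" "on_line q X \<and> on_line q Y"
  then show "p = q"
    using point_eq_if_evals_eq[OF assms] unfolding on_line_iff_eval by simp
qed

lemma on_line_meet:
  assumes "\<not> parallel X Y"
  shows "on_line (meet X Y) X" "on_line (meet X Y) Y"
  using theI'[OF meet_unique[OF assms]] unfolding meet_def by auto

lemma line_through_unique:
  assumes "p \<noteq> q"
  shows "\<exists>!l. is_line l \<and> on_line p l \<and> on_line q l"
proof (rule ex_ex1I)
  define wx where "wx = fst q - fst p"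
  define wy where "wy = snd q - snd p"
  show "\<exists>l. is_line l \<and> on_line p l \<and> on_line q l"
  proof (cases "wx = 0")
    case True
    then show ?thesis
      by (intro exI[of _ "(1, 0, - fst p)"]) (simp add: is_line_def on_line_def tL_def uL_def vL_def wx_def)
  next
    case False
    then show ?thesis
      by (intro exI[of _ "(wy / wx, 1, snd p - wy / wx * fst p)"])
        (simp add: is_line_def on_line_def tL_def uL_def vL_def field_simps wx_def wy_def)
  qed
next
  fix l l'
  assume l: "is_line l \<and> on_line p l \<and> on_line q l" and l': "is_line l' \<and> on_line p l' \<and> on_line q l'"
  have "parallel l l'"
    using l l' assms
    by (intro parallel_if_common_direction[of _ "q - p"]) (auto simp: line_lin_diff on_line_iff_eval)
  then show "l = l'" using l l' parallel_lines_eq by blast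
qed

lemma on_line_line_through:
  assumes "p \<noteq> q"
  shows "on_line p (line_through p q)" "on_line q (line_through p q)"
  using theI'[OF line_through_unique[OF assms]] unfolding line_through_def by auto

text \<open>Along the line m + s d the lines X and Y are hit at s = -X(m)/X(d) and s = -Y(m)/Y(d)
  (X(d) the linear part), so m is the midpoint of the two points iff this form vanishes.\<close>
definition midpoint_form :: "'a::field line \<Rightarrow> 'a line \<Rightarrow> 'a point \<Rightarrow> 'a \<times> 'a \<Rightarrow> 'a" where
  "midpoint_form X Y m d = line_eval X m * line_lin Y d + line_eval Y m * line_lin X d"

lemma midpoint_form_midpt:
  fixes l X Y :: "'a::field line"
  assumes two: "(2::'a) \<noteq> 0" and "\<not> parallel l X" "\<not> parallel l Y"
  defines "m \<equiv> midpt (meet l X) (meet l Y)"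
  shows "line_eval l m = 0" and "midpoint_form X Y m (line_dir l) = 0"
proof -
  define P R where "P = meet l X" and "R = meet l Y"
  have P: "line_eval l P = 0" "line_eval X P = 0" and R: "line_eval l R = 0" "line_eval Y R = 0"
    using on_line_meet assms(2,3) unfolding P_def R_def on_line_iff_eval by blast+
  show "line_eval l m = 0"
    unfolding m_def P_def[symmetric] R_def[symmetric] line_eval_midpt[OF two] P R by simp
  have "line_lin l (R - P) = 0" using P R by (simp add: line_lin_diff)
  moreover have "line_lin X (line_dir l) * line_lin Y (R - P) - line_lin Y (line_dir l) * line_lin X (R - P)
      = line_cross X Y * line_lin l (R - P)"
    unfolding line_lin_def line_dir_def line_cross_def fst_conv snd_conv by algebra
  ultimately have "line_eval X R * line_lin Y (line_dir l) + line_eval Y P * line_lin X (line_dir l) = 0"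
    using P R unfolding line_lin_diff by algebra
  then show "midpoint_form X Y m (line_dir l) = 0"
    unfolding midpoint_form_def m_def P_def[symmetric] R_def[symmetric] line_eval_midpt[OF two] P R
    using two by (simp add: field_simps)
qed

lemma midpoint_form_not_crossing:
  assumes "\<not> crosses l X Y" "line_eval l m = 0"
  shows "midpoint_form X Y m (line_dir l) = 0"
proof -
  have "l = X \<or> l = Y \<or> line_cross X l = 0 \<and> line_cross Y l = 0"
    using assms(1) line_cross_antisym[of X l] line_cross_antisym[of Y l]
    unfolding crosses_def parallel_iff_cross by auto
  then show ?thesis
    using assms(2) unfolding midpoint_form_def line_lin_dir by (auto simp: line_cross_def)
qed

lemma not_crosses_parallel: "\<not> crosses l X Y \<Longrightarrow> parallel l X \<or> parallel l Y"
  by (auto simp: crosses_def parallel_refl)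

lemma mid_eq_Infty_iff: "mid X Y l = Infty \<longleftrightarrow> parallel l X \<or> parallel l Y"
  unfolding mid_def by simp

lemma mid_eq_FinD:
  fixes l X Y :: "'a::field line"
  assumes "(2::'a) \<noteq> 0" "mid X Y l = Fin m"
  shows "line_eval l m = 0" "midpoint_form X Y m (line_dir l) = 0"
proof -
  have l: "\<not> parallel l X" "\<not> parallel l Y" and "m = midpt (meet l X) (meet l Y)"
    using assms(2) unfolding mid_def by (auto split: if_splits)
  then show "line_eval l m = 0" "midpoint_form X Y m (line_dir l) = 0"
    using midpoint_form_midpt[OF assms(1) l] by simp_all
qed

lemma bis_midpoint_eqI: "bisector_mid A B Ap Bp l m \<Longrightarrow> bis_midpoint A B Ap Bp l = m"
  unfolding bis_midpoint_def bisector_mid_def by (rule the_equality) auto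

lemma quadrilateral_not_parallel_both_pairs:
  assumes "quadrilateral A B Ap Bp" "is_line l"
  shows "\<not> ((parallel l A \<or> parallel l Ap) \<and> (parallel l B \<or> parallel l Bp))"
  using assms parallel_trans[OF assms(2)] parallel_sym unfolding quadrilateral_def by metis

lemma bisects_midpoint_form:
  fixes A B Ap Bp l :: "'a::field line"
  assumes two: "(2::'a) \<noteq> 0" and Q: "quadrilateral A B Ap Bp" and "bisects A B Ap Bp l"
  obtains m where "bis_midpoint A B Ap Bp l = Fin m"
    and "midpoint_form A Ap m (line_dir l) = 0" and "midpoint_form B Bp m (line_dir l) = 0"
proof -
  obtain m' where bm: "bisector_mid A B Ap Bp l m'"
    using assms(3) unfolding bisects_def by blast
  then have l: "is_line l" and crosses: "crosses l A Ap \<or> crosses l B Bp"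
    and midA: "crosses l A Ap \<Longrightarrow> mid A Ap l = m'" and midB: "crosses l B Bp \<Longrightarrow> mid B Bp l = m'"
    unfolding bisector_mid_def by auto
  have "m' \<noteq> Infty"
  proof
    assume "m' = Infty"
    then have "(parallel l A \<or> parallel l Ap) \<and> (parallel l B \<or> parallel l Bp)"
      using midA midB not_crosses_parallel mid_eq_Infty_iff by metis
    then show False using quadrilateral_not_parallel_both_pairs[OF Q l] by blast
  qed
  then obtain m where m: "m' = Fin m" by (cases m') auto
  have on_l: "line_eval l m = 0"
    using crosses midA midB mid_eq_FinD(1)[OF two] unfolding m by blast
  have "midpoint_form X Y m (line_dir l) = 0" if "crosses l X Y \<Longrightarrow> mid X Y l = Fin m" for X Y
    using that mid_eq_FinD(2)[OF two] midpoint_form_not_crossing[OF _ on_l] by blast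
  then show thesis
    using that bis_midpoint_eqI[OF bm] midA midB unfolding m by blast
qed

definition dot :: "'a::comm_ring \<times> 'a \<Rightarrow> 'a \<times> 'a \<Rightarrow> 'a" where
  "dot u v = fst u * fst v + snd u * snd v"

definition perp :: "'a::ab_group_add \<times> 'a \<Rightarrow> 'a \<times> 'a" where
  "perp u = (snd u, - fst u)"

definition det2 :: "'a::comm_ring \<times> 'a \<Rightarrow> 'a \<times> 'a \<Rightarrow> 'a" where
  "det2 u v = fst u * snd v - snd u * fst v"

lemma det2_perp: "det2 (perp r) d = dot r d"
  unfolding det2_def perp_def dot_def by simp

lemma det2_eq_0_if_common_kernel:
  fixes r s d :: "'a::field \<times> 'a"
  assumes "dot r d = 0" "dot s d = 0" "d \<noteq> 0"
  shows "det2 r s = 0"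
proof -
  have "fst d * det2 r s = 0" "snd d * det2 r s = 0"
    using assms(1,2) unfolding dot_def det2_def by algebra+
  then show ?thesis using assms(3) by (auto simp: prod_eq_iff)
qed

lemma four_nonzero: "(2::'a::field) \<noteq> 0 \<Longrightarrow> (4::'a) \<noteq> 0"
  by (metis mult_2 mult_eq_0_iff numeral_Bit0 one_add_one)

text \<open>A quadrilateral in affine coordinates (x, y) in which the sides A and B are x = 0 and
  y = 0, A' is ka x + kb y + k0 = 0 and B' is ma x + mb y + m0 = 0; a direction d is recorded
  by the linear parts (p, q) of A and B on it. The vertices are (0, 0), (vtx2_x, 0) = B \<inter> A',
  (vtx3_x, vtx3_y) = A' \<inter> B' and (0, vtx4_y) = B' \<inter> A, with centroid (cx, cy).
  The midpoint forms of {A, A'} and {B, B'} at (x, y) are dot (rowA x y) and dot (rowB x y).\<close>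
locale quad_normal_form =
  fixes ka kb k0 ma mb m0 :: "'a::field"
  assumes two_nonzero: "(2::'a) \<noteq> 0"
    and ka_nonzero: "ka \<noteq> 0" and mb_nonzero: "mb \<noteq> 0"
    and det_nonzero: "ka * mb - kb * ma \<noteq> 0"
    and not_concurrent: "k0 \<noteq> 0 \<or> m0 \<noteq> 0"
begin

definition rowA :: "'a \<Rightarrow> 'a \<Rightarrow> 'a \<times> 'a" where
  "rowA x y = (2 * ka * x + kb * y + k0, kb * x)"

definition rowB :: "'a \<Rightarrow> 'a \<Rightarrow> 'a \<times> 'a" where
  "rowB x y = (ma * y, ma * x + 2 * mb * y + m0)"

definition bisector_dir :: "'a \<Rightarrow> 'a \<Rightarrow> 'a \<times> 'a \<Rightarrow> bool" where
  "bisector_dir x y d \<longleftrightarrow> dot (rowA x y) d = 0 \<and> dot (rowB x y) d = 0"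

definition midpoint_conic :: "'a \<Rightarrow> 'a \<Rightarrow> 'a" where
  "midpoint_conic x y = det2 (rowA x y) (rowB x y)"

definition orth_form :: "'a \<times> 'a \<Rightarrow> 'a \<times> 'a \<Rightarrow> 'a" where
  "orth_form d e = ka * ma * fst d * fst e + ka * mb * (fst d * snd e + fst e * snd d)
     + kb * mb * snd d * snd e"

definition vtx2_x :: 'a where "vtx2_x = - k0 / ka"
definition vtx3_x :: 'a where "vtx3_x = (kb * m0 - k0 * mb) / (ka * mb - kb * ma)"
definition vtx3_y :: 'a where "vtx3_y = (ma * k0 - ka * m0) / (ka * mb - kb * ma)"
definition vtx4_y :: 'a where "vtx4_y = - m0 / mb"
definition cx :: 'a where "cx = (vtx2_x + vtx3_x) / 4"
definition cy :: 'a where "cy = (vtx3_y + vtx4_y) / 4"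

text \<open>d is parallel to A with A parallel to A', or to B with B parallel to B', or to both
  diagonals, whose directions are (vtx3_x, vtx3_y) and (- vtx2_x, vtx4_y).\<close>
definition exceptional_dir :: "'a \<times> 'a \<Rightarrow> bool" where
  "exceptional_dir d \<longleftrightarrow> (kb = 0 \<and> fst d = 0) \<or> (ma = 0 \<and> snd d = 0) \<or>
     (det2 d (vtx3_x, vtx3_y) = 0 \<and> det2 d (- vtx2_x, vtx4_y) = 0)"

lemma vertex3_scaled:
  "(ka * mb - kb * ma) * vtx3_x = kb * m0 - k0 * mb"
  "(ka * mb - kb * ma) * vtx3_y = ma * k0 - ka * m0"
  unfolding vtx3_x_def vtx3_y_def using det_nonzero by simp_all

lemma vertex_equations:
  "ka * vtx2_x + k0 = 0" "ka * vtx3_x + kb * vtx3_y + k0 = 0"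
  "ma * vtx3_x + mb * vtx3_y + m0 = 0" "mb * vtx4_y + m0 = 0"
proof -
  have "(ka * mb - kb * ma) * (ka * vtx3_x + kb * vtx3_y + k0) = 0"
    "(ka * mb - kb * ma) * (ma * vtx3_x + mb * vtx3_y + m0) = 0"
    using vertex3_scaled by algebra+
  then show "ka * vtx3_x + kb * vtx3_y + k0 = 0" "ma * vtx3_x + mb * vtx3_y + m0 = 0"
    using det_nonzero by simp_all
  show "ka * vtx2_x + k0 = 0" "mb * vtx4_y + m0 = 0"
    unfolding vtx2_x_def vtx4_y_def using ka_nonzero mb_nonzero by simp_all
qed

lemma centroid_equations:
  "4 * ka * (ka * mb - kb * ma) * cx = - k0 * (ka * mb - kb * ma) + ka * (kb * m0 - k0 * mb)"
  "4 * mb * (ka * mb - kb * ma) * cy = mb * (ma * k0 - ka * m0) - m0 * (ka * mb - kb * ma)"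
proof -
  have "4 * cx = vtx2_x + vtx3_x" "4 * cy = vtx3_y + vtx4_y"
    unfolding cx_def cy_def using four_nonzero[OF two_nonzero] by simp_all
  then show "4 * ka * (ka * mb - kb * ma) * cx = - k0 * (ka * mb - kb * ma) + ka * (kb * m0 - k0 * mb)"
    "4 * mb * (ka * mb - kb * ma) * cy = mb * (ma * k0 - ka * m0) - m0 * (ka * mb - kb * ma)"
    using vertex3_scaled vertex_equations(1,4) by algebra+
qed

lemma midpoint_conic_eq_0:
  assumes "bisector_dir x y d" "d \<noteq> 0"
  shows "midpoint_conic x y = 0"
  using det2_eq_0_if_common_kernel assms unfolding bisector_dir_def midpoint_conic_def by blast

lemma rows_eq_0_imp_centroid:
  assumes "rowA x y = 0" "rowB x y = 0"
  shows "x = cx \<and> y = cy"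
proof -
  have r: "2 * ka * x + kb * y + k0 = 0" "kb * x = 0" "ma * y = 0" "ma * x + 2 * mb * y + m0 = 0"
    using assms unfolding rowA_def rowB_def zero_prod_def by auto
  note c = centroid_equations
  have "4 * ka * (ka * mb - kb * ma) * (x - cx) = 0 \<and> 4 * mb * (ka * mb - kb * ma) * (y - cy) = 0"
  proof (cases "kb = 0"; cases "ma = 0")
    assume "kb \<noteq> 0" "ma \<noteq> 0"
    then have "x = 0" "y = 0" using r(2,3) by simp_all
    then show ?thesis using r(1,4) not_concurrent by simp
  next
    assume "kb \<noteq> 0" "ma = 0"
    then have "x = 0" using r(2) by simp
    with \<open>ma = 0\<close> show ?thesis using r(1,4) c by algebra
  next
    assume "kb = 0" "ma \<noteq> 0"
    then have "y = 0" using r(3) by simp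
    with \<open>kb = 0\<close> show ?thesis using r(1,4) c by algebra
  next
    assume "kb = 0" "ma = 0"
    then show ?thesis using r(1,4) c by algebra
  qed
  then show ?thesis
    using ka_nonzero mb_nonzero det_nonzero four_nonzero[OF two_nonzero] by auto
qed

lemma nonzero_row:
  assumes "bisector_dir x y d" "\<not> (x = cx \<and> y = cy)"
  obtains r where "r \<in> {rowA x y, rowB x y}" "r \<noteq> 0" "dot r d = 0"
  using assms rows_eq_0_imp_centroid unfolding bisector_dir_def by blast

text \<open>This is where the centroid enters: for (x', y') the reflection of (x, y) in (cx, cy),
  each of the four values is a multiple of midpoint_conic x y.\<close>
lemma antipodal_rows_orth:
  assumes "midpoint_conic x y = 0" "x + x' = 2 * cx" "y + y' = 2 * cy"
    and "r \<in> {rowA x y, rowB x y}" "s \<in> {rowA x' y', rowB x' y'}"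
  shows "orth_form (perp r) (perp s) = 0"
proof -
  let ?D = "ka * mb - kb * ma"
  let ?H = "2 * ka * mb * ?D"
  have x': "?H * x' = mb * (- k0 * ?D + ka * (kb * m0 - k0 * mb)) - ?H * x"
    using centroid_equations(1) assms(2) by algebra
  have y': "?H * y' = ka * (mb * (ma * k0 - ka * m0) - m0 * ?D) - ?H * y"
    using centroid_equations(2) assms(3) by algebra
  have "2 * ?H * orth_form (perp (rowA x y)) (perp (rowA x' y')) = - (kb ^ 2) * ?H * midpoint_conic x y"
    "2 * ?H * orth_form (perp (rowB x y)) (perp (rowB x' y')) = - (ma ^ 2) * ?H * midpoint_conic x y"
    "2 * ?H * orth_form (perp (rowA x y)) (perp (rowB x' y')) = (2 * ka * mb - kb * ma) * ?H * midpoint_conic x y"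
    "2 * ?H * orth_form (perp (rowB x y)) (perp (rowA x' y')) = (2 * ka * mb - kb * ma) * ?H * midpoint_conic x y"
    using x' y' unfolding orth_form_def perp_def rowA_def rowB_def midpoint_conic_def det2_def fst_conv snd_conv
    by algebra+
  moreover have "?H \<noteq> 0"
    using two_nonzero ka_nonzero mb_nonzero det_nonzero by simp
  ultimately show ?thesis
    using assms(1,4,5) four_nonzero[OF two_nonzero] by auto
qed

lemma orth_form_sym: "orth_form d e = orth_form e d"
  unfolding orth_form_def by (simp add: algebra_simps)

lemma orth_form_perp:
  assumes "dot r d = 0" "r \<noteq> 0" "orth_form (perp r) e = 0"
  shows "orth_form d e = 0"
proof -
  have "fst r * orth_form d e = - snd d * orth_form (perp r) e"
    "snd r * orth_form d e = fst d * orth_form (perp r) e"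
    using assms(1) unfolding orth_form_def perp_def dot_def fst_conv snd_conv by algebra+
  then show ?thesis using assms(2,3) by (auto simp: prod_eq_iff)
qed

lemma orth_form_nondegenerate:
  assumes "d \<noteq> 0" "orth_form d u = 0" "orth_form d v = 0"
  shows "det2 u v = 0"
proof -
  define s where "s = (ka * ma * fst d + ka * mb * snd d, ka * mb * fst d + kb * mb * snd d)"
  have s: "orth_form d w = dot w s" for w
    unfolding orth_form_def s_def dot_def by (simp add: algebra_simps)
  have "s \<noteq> 0"
  proof
    assume "s = 0"
    then have "ka * ma * fst d + ka * mb * snd d = 0" "ka * mb * fst d + kb * mb * snd d = 0"
      unfolding s_def zero_prod_def by simp_all
    then have "ka * mb * (ka * mb - kb * ma) * fst d = 0" "ka * mb * (ka * mb - kb * ma) * snd d = 0"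
      by algebra+
    then show False
      using assms(1) ka_nonzero mb_nonzero det_nonzero by (simp add: prod_eq_iff)
  qed
  then show ?thesis using det2_eq_0_if_common_kernel assms(2,3) unfolding s by blast
qed

lemma orth_dir_at_antipode:
  assumes "bisector_dir x y d" "d \<noteq> 0" "orth_form d e = 0"
  shows "bisector_dir (2 * cx - x) (2 * cy - y) e"
proof (cases "rowA x y = 0 \<and> rowB x y = 0")
  case True
  then have "x = cx" "y = cy" using rows_eq_0_imp_centroid by blast+
  then have reflect: "2 * cx - x = x" "2 * cy - y = y" by (metis add_diff_cancel_right' mult_2)+
  show ?thesis using True unfolding reflect bisector_dir_def dot_def by simp
next
  case False
  then obtain r where r: "r \<in> {rowA x y, rowB x y}" "r \<noteq> 0" "dot r d = 0"
    using assms(1) unfolding bisector_dir_def by blast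
  have "dot s e = 0" if s: "s \<in> {rowA (2 * cx - x) (2 * cy - y), rowB (2 * cx - x) (2 * cy - y)}" for s
  proof -
    have "orth_form (perp r) (perp s) = 0"
      using antipodal_rows_orth[OF midpoint_conic_eq_0[OF assms(1,2)] _ _ r(1) s] by simp
    then have "orth_form d (perp s) = 0" by (rule orth_form_perp[OF r(3,2)])
    from orth_form_nondegenerate[OF assms(2) this assms(3)] show "dot s e = 0"
      unfolding det2_perp .
  qed
  then show ?thesis unfolding bisector_dir_def by blast
qed

lemma bisector_dir_determines_point:
  assumes "bisector_dir x y d" "bisector_dir x' y' d" "orth_form d d \<noteq> 0"
  shows "x = x' \<and> y = y'"
proof -
  have "2 * orth_form d d * (x - x') = 0" "2 * orth_form d d * (y - y') = 0"
    using assms(1,2) unfolding bisector_dir_def rowA_def rowB_def dot_def orth_form_def fst_conv snd_conv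
    by algebra+
  then show ?thesis using assms(3) two_nonzero by auto
qed

lemma isotropic_bisector_dir_exceptional:
  assumes "bisector_dir x y d" "d \<noteq> 0" "orth_form d d = 0"
  shows "exceptional_dir d"
proof -
  obtain p q where d: "d = (p, q)" by fastforce
  consider "p = 0" | "q = 0" | "p \<noteq> 0" "q \<noteq> 0" by blast
  then show ?thesis
  proof cases
    case 1
    then have "q \<noteq> 0" "kb * mb * q * q = 0"
      using assms(2,3) unfolding d orth_form_def zero_prod_def by auto
    then show ?thesis using mb_nonzero 1 unfolding exceptional_dir_def d by simp
  next
    case 2
    then have "p \<noteq> 0" "ka * ma * p * p = 0"
      using assms(2,3) unfolding d orth_form_def zero_prod_def by auto
    then show ?thesis using ka_nonzero 2 unfolding exceptional_dir_def d by simp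
  next
    case 3
    have "q * ((2 * ka * p + kb * q) * m0 - ma * k0 * p) = 0"
      "p * (kb * m0 * q - (ma * p + 2 * mb * q) * k0) = 0"
      using assms(1,3) unfolding d bisector_dir_def rowA_def rowB_def dot_def orth_form_def fst_conv snd_conv
      by algebra+
    then have "(2 * ka * p + kb * q) * m0 - ma * k0 * p = 0" "kb * m0 * q - (ma * p + 2 * mb * q) * k0 = 0"
      using 3 by simp_all
    then have "2 * ((ka * mb - kb * ma) * det2 d (vtx3_x, vtx3_y)) = 0"
      "2 * (ka * mb * det2 d (- vtx2_x, vtx4_y)) = 0"
      using vertex3_scaled vertex_equations(1,4) unfolding d det2_def fst_conv snd_conv by algebra+
    then show ?thesis
      unfolding exceptional_dir_def using two_nonzero det_nonzero ka_nonzero mb_nonzero by auto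
  qed
qed

lemma antipodal_bisector_dirs_orth:
  assumes d: "bisector_dir x y d" "d \<noteq> 0" and e: "bisector_dir x' y' e"
    and anti: "x + x' = 2 * cx" "y + y' = 2 * cy" and "(x, y) \<noteq> (x', y')"
  shows "orth_form d e = 0"
proof -
  have "\<not> (x = cx \<and> y = cy)" "\<not> (x' = cx \<and> y' = cy)"
    using anti assms(6) by (metis add_left_cancel add.commute mult_2)+
  then obtain r s where r: "r \<in> {rowA x y, rowB x y}" "r \<noteq> 0" "dot r d = 0"
    and s: "s \<in> {rowA x' y', rowB x' y'}" "s \<noteq> 0" "dot s e = 0"
    using nonzero_row d(1) e by metis
  have "orth_form (perp r) (perp s) = 0"
    using antipodal_rows_orth[OF midpoint_conic_eq_0[OF d] anti r(1) s(1)] .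
  then have "orth_form (perp s) d = 0" using orth_form_perp[OF r(3,2)] orth_form_sym by metis
  then show ?thesis using orth_form_perp[OF s(3,2)] orth_form_sym by metis
qed

lemma orth_bisector_dirs_antipodal_or_exceptional:
  assumes d: "bisector_dir x y d" "d \<noteq> 0" and e: "bisector_dir x' y' e" "e \<noteq> 0"
    and orth: "orth_form d e = 0"
  shows "(x + x' = 2 * cx \<and> y + y' = 2 * cy) \<or> (det2 d e = 0 \<and> exceptional_dir d)"
proof (cases "orth_form d d = 0")
  case True
  then show ?thesis
    using orth_form_nondegenerate[OF d(2) True orth] isotropic_bisector_dir_exceptional[OF d True] by blast
next
  case False
  have "bisector_dir (2 * cx - x') (2 * cy - y') d"
    using orth_dir_at_antipode[OF e] orth orth_form_sym by metis
  then show ?thesis using bisector_dir_determines_point[OF d(1) _ False] by auto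
qed

end

lemma line_lin_decompose:
  assumes "\<not> parallel X Y"
  shows "line_lin Z d = line_cross Z Y / line_cross X Y * line_lin X d
    + line_cross X Z / line_cross X Y * line_lin Y d"
proof -
  have "line_cross X Y * line_lin Z d = line_cross Z Y * line_lin X d + line_cross X Z * line_lin Y d"
    unfolding line_cross_def line_lin_def by algebra
  then show ?thesis using assms unfolding parallel_iff_cross by (simp add: field_simps)
qed

lemma line_eval_decompose:
  assumes "\<not> parallel X Y"
  shows "line_eval Z p = line_cross Z Y / line_cross X Y * line_eval X p
    + line_cross X Z / line_cross X Y * line_eval Y p + line_eval Z (meet X Y)"
proof -
  have "line_eval X (meet X Y) = 0" "line_eval Y (meet X Y) = 0"
    using on_line_meet[OF assms] unfolding on_line_iff_eval by blast+
  then show ?thesis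
    using line_lin_decompose[OF assms, of Z "p - meet X Y"] by (simp add: line_lin_diff algebra_simps)
qed

lemma line_eval_centroid:
  fixes X :: "'a::field line"
  assumes "(2::'a) \<noteq> 0"
  shows "line_eval X (centroid A B Ap Bp) = (line_eval X (meet A B) + line_eval X (meet B Ap)
    + line_eval X (meet Ap Bp) + line_eval X (meet Bp A)) / 4"
proof -
  have "4 * fst (centroid A B Ap Bp) = fst (meet A B) + fst (meet B Ap) + fst (meet Ap Bp) + fst (meet Bp A)"
    "4 * snd (centroid A B Ap Bp) = snd (meet A B) + snd (meet B Ap) + snd (meet Ap Bp) + snd (meet Bp A)"
    unfolding centroid_def Let_def using four_nonzero[OF assms] by simp_all
  then have "4 * line_eval X (centroid A B Ap Bp) = line_eval X (meet A B) + line_eval X (meet B Ap)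
    + line_eval X (meet Ap Bp) + line_eval X (meet Bp A)"
    unfolding line_eval_def by algebra
  then show ?thesis using four_nonzero[OF assms] by (simp add: eq_divide_eq mult.commute)
qed

lemma parallel_line_through:
  assumes "p \<noteq> q" "line_lin l (q - p) = 0"
  shows "parallel l (line_through p q)"
proof (rule parallel_if_common_direction[OF assms(2)])
  show "line_lin (line_through p q) (q - p) = 0"
    using on_line_line_through[OF assms(1)] by (simp add: line_lin_diff on_line_iff_eval)
  show "q - p \<noteq> 0" using assms(1) by simp
qed

locale quad_setting =
  fixes A B Ap Bp :: "'a::field line"
  assumes char: "(2::'a) \<noteq> 0" and quad: "quadrilateral A B Ap Bp"
begin

lemma adjacent_not_parallel:
  "\<not> parallel A B" "\<not> parallel B Ap" "\<not> parallel Ap Bp" "\<not> parallel Bp A"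
  using quad unfolding quadrilateral_def by auto

lemma not_concurrent_sides:
  "\<not> (on_line p A \<and> on_line p B \<and> on_line p Ap \<and> on_line p Bp)"
  using quad unfolding quadrilateral_def by blast

lemma cross_AB_nonzero: "line_cross A B \<noteq> 0"
  using adjacent_not_parallel(1) unfolding parallel_iff_cross .

definition ka :: 'a where "ka = line_cross Ap B / line_cross A B"
definition kb :: 'a where "kb = line_cross A Ap / line_cross A B"
definition k0 :: 'a where "k0 = line_eval Ap (meet A B)"
definition ma :: 'a where "ma = line_cross Bp B / line_cross A B"
definition mb :: 'a where "mb = line_cross A Bp / line_cross A B"
definition m0 :: 'a where "m0 = line_eval Bp (meet A B)"

lemma line_lin_Ap: "line_lin Ap d = ka * line_lin A d + kb * line_lin B d"
  and line_lin_Bp: "line_lin Bp d = ma * line_lin A d + mb * line_lin B d"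
  and line_eval_Ap: "line_eval Ap p = ka * line_eval A p + kb * line_eval B p + k0"
  and line_eval_Bp: "line_eval Bp p = ma * line_eval A p + mb * line_eval B p + m0"
  unfolding ka_def kb_def k0_def ma_def mb_def m0_def
  using line_lin_decompose line_eval_decompose adjacent_not_parallel(1) by blast+

sublocale quad_normal_form ka kb k0 ma mb m0
proof
  show "(2::'a) \<noteq> 0" by (rule char)
  show "ka \<noteq> 0" "mb \<noteq> 0"
    using adjacent_not_parallel(2,4) cross_AB_nonzero line_cross_antisym[of Ap B] line_cross_antisym[of A Bp]
    unfolding ka_def mb_def parallel_iff_cross by auto
  have "line_cross Ap B * line_cross A Bp - line_cross A Ap * line_cross Bp B
      = line_cross A B * line_cross Ap Bp"
    unfolding line_cross_def by algebra
  then have "ka * mb - kb * ma = line_cross Ap Bp / line_cross A B"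
    unfolding ka_def kb_def ma_def mb_def using cross_AB_nonzero by (simp add: field_simps)
  then show "ka * mb - kb * ma \<noteq> 0"
    using adjacent_not_parallel(3) cross_AB_nonzero unfolding parallel_iff_cross by simp
  show "k0 \<noteq> 0 \<or> m0 \<noteq> 0"
    using not_concurrent_sides[of "meet A B"] on_line_meet[OF adjacent_not_parallel(1)]
    unfolding k0_def m0_def on_line_iff_eval by auto
qed

definition dir_coords :: "'a \<times> 'a \<Rightarrow> 'a \<times> 'a" where
  "dir_coords d = (line_lin A d, line_lin B d)"

lemma dir_coords_line_dir_nonzero: "is_line l \<Longrightarrow> dir_coords (line_dir l) \<noteq> 0"
  using vector_eq_0_if_lin_eq_0[OF adjacent_not_parallel(1)] line_dir_nonzero
  unfolding dir_coords_def zero_prod_def by blast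

lemma det2_dir_coords:
  "det2 (dir_coords (line_dir l)) (dir_coords w) = line_cross A B * line_lin l w"
  unfolding det2_def dir_coords_def line_dir_def line_lin_def line_cross_def by simp algebra

lemma midpoint_forms_iff_bisector_dir:
  "midpoint_form A Ap m d = 0 \<and> midpoint_form B Bp m d = 0
    \<longleftrightarrow> bisector_dir (line_eval A m) (line_eval B m) (dir_coords d)"
proof -
  have "midpoint_form A Ap m d = dot (rowA (line_eval A m) (line_eval B m)) (dir_coords d)"
    "midpoint_form B Bp m d = dot (rowB (line_eval A m) (line_eval B m)) (dir_coords d)"
    unfolding midpoint_form_def line_lin_Ap line_lin_Bp line_eval_Ap line_eval_Bp
      dot_def rowA_def rowB_def dir_coords_def by (simp_all add: algebra_simps)
  then show ?thesis unfolding bisector_dir_def by simp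
qed

lemma qform_eq:
  "qform A B Ap Bp d e = line_cross A B * orth_form (dir_coords d) (dir_coords e)"
proof -
  have "line_cross A B * qform A B Ap Bp d e
      = line_cross Ap B * line_cross Bp B * line_lin A d * line_lin A e
      + line_cross Ap B * line_cross A Bp * (line_lin A d * line_lin B e + line_lin A e * line_lin B d)
      + line_cross A Ap * line_cross A Bp * line_lin B d * line_lin B e"
    unfolding qform_def qalpha_def qbeta_def qgamma_def line_lin_def line_cross_def by algebra
  also have "\<dots> = line_cross A B * (line_cross A B * orth_form (dir_coords d) (dir_coords e))"
    unfolding orth_form_def dir_coords_def fst_conv snd_conv
    unfolding ka_def kb_def ma_def mb_def using cross_AB_nonzero by (simp add: field_simps)
  finally show ?thesis using cross_AB_nonzero by simp
qed

lemma Q_orthogonal_iff: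
  "Q_orthogonal A B Ap Bp l1 l2 \<longleftrightarrow> orth_form (dir_coords (line_dir l1)) (dir_coords (line_dir l2)) = 0"
  unfolding Q_orthogonal_def qform_eq line_dir_def using cross_AB_nonzero by simp

lemma vertices_on_sides:
  "on_line (meet A B) A" "on_line (meet A B) B" "on_line (meet B Ap) B" "on_line (meet B Ap) Ap"
  "on_line (meet Ap Bp) Ap" "on_line (meet Ap Bp) Bp" "on_line (meet Bp A) Bp" "on_line (meet Bp A) A"
  using on_line_meet adjacent_not_parallel by blast+

lemma vertex_coords:
  "line_eval A (meet A B) = 0" "line_eval B (meet A B) = 0"
  "line_eval A (meet B Ap) = vtx2_x" "line_eval B (meet B Ap) = 0"
  "line_eval A (meet Ap Bp) = vtx3_x" "line_eval B (meet Ap Bp) = vtx3_y"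
  "line_eval A (meet Bp A) = 0" "line_eval B (meet Bp A) = vtx4_y"
proof -
  note e = vertices_on_sides[unfolded on_line_iff_eval line_eval_Ap line_eval_Bp]
  show "line_eval A (meet A B) = 0" "line_eval B (meet A B) = 0"
    "line_eval B (meet B Ap) = 0" "line_eval A (meet Bp A) = 0"
    using e by simp_all
  have "ka * line_eval A (meet B Ap) = ka * vtx2_x" "mb * line_eval B (meet Bp A) = mb * vtx4_y"
    using e(3,4,7,8) vertex_equations(1,4) by algebra+
  then show "line_eval A (meet B Ap) = vtx2_x" "line_eval B (meet Bp A) = vtx4_y"
    using ka_nonzero mb_nonzero by simp_all
  have "(ka * mb - kb * ma) * line_eval A (meet Ap Bp) = (ka * mb - kb * ma) * vtx3_x"
    "(ka * mb - kb * ma) * line_eval B (meet Ap Bp) = (ka * mb - kb * ma) * vtx3_y"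
    using e(5,6) vertex3_scaled by algebra+
  then show "line_eval A (meet Ap Bp) = vtx3_x" "line_eval B (meet Ap Bp) = vtx3_y"
    using det_nonzero by simp_all
qed

lemma centroid_coords:
  "line_eval A (centroid A B Ap Bp) = cx" "line_eval B (centroid A B Ap Bp) = cy"
  unfolding line_eval_centroid[OF char] vertex_coords cx_def cy_def by simp_all

lemma midpt_eq_centroid_iff:
  "midpt m1 m2 = centroid A B Ap Bp \<longleftrightarrow>
    line_eval A m1 + line_eval A m2 = 2 * cx \<and> line_eval B m1 + line_eval B m2 = 2 * cy"
proof -
  have "line_eval X (midpt m1 m2) = c \<longleftrightarrow> line_eval X m1 + line_eval X m2 = 2 * c" for X c
    unfolding line_eval_midpt[OF char] using char by (auto simp: field_simps)
  then show ?thesis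
    using point_eq_if_evals_eq[OF adjacent_not_parallel(1)] centroid_coords by metis
qed

lemma diagonal_vertices_distinct: "meet A B \<noteq> meet Ap Bp" "meet B Ap \<noteq> meet Bp A"
  using not_concurrent_sides vertices_on_sides by metis+

lemma parallel_diagonals_if_exceptional:
  assumes "det2 (dir_coords (line_dir l)) (vtx3_x, vtx3_y) = 0"
    and "det2 (dir_coords (line_dir l)) (- vtx2_x, vtx4_y) = 0"
  shows "parallel l (diag1 A B Ap Bp)" "parallel l (diag2 A B Ap Bp)"
proof -
  have "dir_coords (meet Ap Bp - meet A B) = (vtx3_x, vtx3_y)"
    "dir_coords (meet Bp A - meet B Ap) = (- vtx2_x, vtx4_y)"
    unfolding dir_coords_def line_lin_diff vertex_coords by simp_all
  then have "line_lin l (meet Ap Bp - meet A B) = 0" "line_lin l (meet Bp A - meet B Ap) = 0"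
    using assms det2_dir_coords[of l] cross_AB_nonzero by (metis mult_eq_0_iff)+
  then show "parallel l (diag1 A B Ap Bp)" "parallel l (diag2 A B Ap Bp)"
    unfolding diag1_def diag2_def
    using parallel_line_through diagonal_vertices_distinct by blast+
qed

lemma exceptional_dir_both_parallel:
  assumes l1: "is_line l1" and exc: "exceptional_dir (dir_coords (line_dir l1))"
    and par: "parallel l1 l2"
  shows "both_par_to_par_pair A B Ap Bp l1 l2"
proof -
  have side: "parallel l1 X \<and> parallel l2 X" if "line_cross X l1 = 0" for X
    using that parallel_trans[OF l1 par] line_cross_antisym[of X l1] unfolding parallel_iff_cross by simp
  consider "kb = 0" "line_cross A l1 = 0" | "ma = 0" "line_cross B l1 = 0"
    | "parallel l1 (diag1 A B Ap Bp)" "parallel l1 (diag2 A B Ap Bp)"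
    using exc parallel_diagonals_if_exceptional[of l1]
    unfolding exceptional_dir_def dir_coords_def line_lin_dir by auto
  then show ?thesis
  proof cases
    case 1
    then have "parallel A Ap" using cross_AB_nonzero unfolding kb_def parallel_iff_cross by simp
    then show ?thesis using side[OF 1(2)] unfolding both_par_to_par_pair_def by blast
  next
    case 2
    then have "parallel B Bp"
      using cross_AB_nonzero line_cross_antisym[of Bp B] unfolding ma_def parallel_iff_cross by simp
    then show ?thesis using side[OF 2(2)] unfolding both_par_to_par_pair_def by blast
  next
    case 3
    then have "parallel (diag1 A B Ap Bp) (diag2 A B Ap Bp)" "parallel l2 (diag1 A B Ap Bp)"
      using parallel_trans[OF l1] par by blast+
    then show ?thesis using 3(1) unfolding both_par_to_par_pair_def by blast
  qed
qed

lemma bisects_bisector_dir: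
  assumes "bisects A B Ap Bp l"
  obtains m where "bis_midpoint A B Ap Bp l = Fin m"
    and "bisector_dir (line_eval A m) (line_eval B m) (dir_coords (line_dir l))"
    and "dir_coords (line_dir l) \<noteq> 0"
proof -
  obtain m where "bis_midpoint A B Ap Bp l = Fin m"
    and "midpoint_form A Ap m (line_dir l) = 0" "midpoint_form B Bp m (line_dir l) = 0"
    using bisects_midpoint_form[OF char quad assms] .
  moreover have "is_line l" using assms unfolding bisects_def bisector_mid_def by blast
  ultimately show thesis
    using that midpoint_forms_iff_bisector_dir dir_coords_line_dir_nonzero by blast
qed

lemma antipodal_bisectors_orthogonal:
  assumes "Q_antipodal A B Ap Bp l1 l2" "bis_midpoint A B Ap Bp l1 \<noteq> bis_midpoint A B Ap Bp l2"
  shows "Q_orthogonal A B Ap Bp l1 l2"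
proof -
  obtain m1 m2 where m1: "bis_midpoint A B Ap Bp l1 = Fin m1" and m2: "bis_midpoint A B Ap Bp l2 = Fin m2"
    and "midpt m1 m2 = centroid A B Ap Bp"
    and b1: "bisects A B Ap Bp l1" and b2: "bisects A B Ap Bp l2"
    using assms(1) unfolding Q_antipodal_def by blast
  then have anti: "line_eval A m1 + line_eval A m2 = 2 * cx" "line_eval B m1 + line_eval B m2 = 2 * cy"
    unfolding midpt_eq_centroid_iff by blast+
  obtain m1' where "bis_midpoint A B Ap Bp l1 = Fin m1'"
    and "bisector_dir (line_eval A m1') (line_eval B m1') (dir_coords (line_dir l1))"
    and nonzero: "dir_coords (line_dir l1) \<noteq> 0"
    using bisects_bisector_dir[OF b1] by blast
  with m1 have d1: "bisector_dir (line_eval A m1) (line_eval B m1) (dir_coords (line_dir l1))"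
    by simp
  obtain m2' where "bis_midpoint A B Ap Bp l2 = Fin m2'"
    and "bisector_dir (line_eval A m2') (line_eval B m2') (dir_coords (line_dir l2))"
    using bisects_bisector_dir[OF b2] by blast
  with m2 have d2: "bisector_dir (line_eval A m2) (line_eval B m2) (dir_coords (line_dir l2))"
    by simp
  have "(line_eval A m1, line_eval B m1) \<noteq> (line_eval A m2, line_eval B m2)"
  proof
    assume "(line_eval A m1, line_eval B m1) = (line_eval A m2, line_eval B m2)"
    then have "m1 = m2" using point_eq_if_evals_eq[OF adjacent_not_parallel(1)] by simp
    then show False using assms(2) m1 m2 by simp
  qed
  from antipodal_bisector_dirs_orth[OF d1 nonzero d2 anti this] show ?thesis
    unfolding Q_orthogonal_iff .
qed

lemma orthogonal_bisectors_antipodal: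
  assumes b1: "bisects A B Ap Bp l1" and b2: "bisects A B Ap Bp l2"
    and orth: "Q_orthogonal A B Ap Bp l1 l2" and not_par: "\<not> both_par_to_par_pair A B Ap Bp l1 l2"
  shows "Q_antipodal A B Ap Bp l1 l2"
proof -
  obtain m1 where m1: "bis_midpoint A B Ap Bp l1 = Fin m1"
    and d1: "bisector_dir (line_eval A m1) (line_eval B m1) (dir_coords (line_dir l1))"
      "dir_coords (line_dir l1) \<noteq> 0"
    using bisects_bisector_dir[OF b1] by blast
  obtain m2 where m2: "bis_midpoint A B Ap Bp l2 = Fin m2"
    and d2: "bisector_dir (line_eval A m2) (line_eval B m2) (dir_coords (line_dir l2))"
      "dir_coords (line_dir l2) \<noteq> 0"
    using bisects_bisector_dir[OF b2] by blast
  have "\<not> (det2 (dir_coords (line_dir l1)) (dir_coords (line_dir l2)) = 0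
      \<and> exceptional_dir (dir_coords (line_dir l1)))"
  proof
    assume "det2 (dir_coords (line_dir l1)) (dir_coords (line_dir l2)) = 0
      \<and> exceptional_dir (dir_coords (line_dir l1))"
    moreover have "is_line l1" using b1 unfolding bisects_def bisector_mid_def by blast
    ultimately show False
      using exceptional_dir_both_parallel not_par cross_AB_nonzero
      unfolding det2_dir_coords line_lin_dir parallel_iff_cross by simp
  qed
  then have "midpt m1 m2 = centroid A B Ap Bp"
    using orth_bisector_dirs_antipodal_or_exceptional[OF d1 d2] orth unfolding Q_orthogonal_iff midpt_eq_centroid_iff by blast
  then show ?thesis unfolding Q_antipodal_def using b1 b2 m1 m2 by blast
qed

end

theorem corollary6p5:
  fixes A B Ap Bp :: "'a::field line"
  assumes char: "(2::'a) \<noteq> 0"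
    and Q: "quadrilateral A B Ap Bp"
  shows "(\<forall>l1 l2. bisects A B Ap Bp l1 \<and> bisects A B Ap Bp l2 \<and>
            Q_orthogonal A B Ap Bp l1 l2 \<and> \<not> both_par_to_par_pair A B Ap Bp l1 l2
            \<longrightarrow> Q_antipodal A B Ap Bp l1 l2 \<and> Q_pair A B Ap Bp l1 l2)
       \<and> (\<forall>l1 l2. Q_antipodal A B Ap Bp l1 l2 \<and>
            bis_midpoint A B Ap Bp l1 \<noteq> bis_midpoint A B Ap Bp l2
            \<longrightarrow> Q_orthogonal A B Ap Bp l1 l2 \<and> Q_pair A B Ap Bp l1 l2)"
proof -
  interpret quad_setting A B Ap Bp using char Q by unfold_locales
  show ?thesis
    unfolding Q_pair_def using orthogonal_bisectors_antipodal antipodal_bisectors_orthogonal by blast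
qed

end
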